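(* There exist a complete pointed metric space $M$ which is not a Banach space and a real Banach space $Y$ such that $\mathrm{A}(M,Y)$ is not dense in $\mathrm{Lip}_0(M,Y)$.
   Context: Throughout, metric spaces are complete and pointed, with base point $0$. $\mathrm{Lip}_0(M,Y)$ is the Banach space of Lipschitz maps $f:M\to Y$ with $f(0)=0$, normed by $\|f\|=\sup_{p\neq q}\|f(p)-f(q)\|/d(p,q)$. A map $f$ attains its norm toward $y\in Y$ if there is a sequence $(p_n,q_n)$ in $M\times M$ with $p_n\neq q_n$ such that $[f(p_n)-f(q_n)]/d(p_n,q_n)\to y$ and $\|y\|=\|f\|$; $\mathrm{A}(M,Y)$ is the set of $f$ attaining their norm toward some vector. *)

theory Defs
  imports "HOL-Analysis.Analysis"
begin

definition lip0 :: "'a metric \<Rightarrow> 'a \<Rightarrow> 'v::real_normed_vector set \<Rightarrow> ('a \<Rightarrow> 'v) \<Rightarrow> bool" where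
  "lip0 M z Y f \<longleftrightarrow> f ` mspace M \<subseteq> Y \<and> f z = 0 \<and>
     (\<exists>K. \<forall>p\<in>mspace M. \<forall>q\<in>mspace M. norm (f p - f q) \<le> K * mdist M p q)"

definition lipnorm :: "'a metric \<Rightarrow> ('a \<Rightarrow> 'v::real_normed_vector) \<Rightarrow> real" where
  "lipnorm M f = Sup ({0} \<union> {norm (f p - f q) / mdist M p q | p q.
       p \<in> mspace M \<and> q \<in> mspace M \<and> p \<noteq> q})"

definition attains_toward :: "'a metric \<Rightarrow> ('a \<Rightarrow> 'v::real_normed_vector) \<Rightarrow> 'v \<Rightarrow> bool" where
  "attains_toward M f y \<longleftrightarrow> (\<exists>p q :: nat \<Rightarrow> 'a.
      (\<forall>n. p n \<in> mspace M \<and> q n \<in> mspace M \<and> p n \<noteq> q n) \<and>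
      ((\<lambda>n. (f (p n) - f (q n)) /\<^sub>R mdist M (p n) (q n)) \<longlongrightarrow> y) sequentially \<and>
      norm y = lipnorm M f)"

definition Aset :: "'a metric \<Rightarrow> 'a \<Rightarrow> 'v::real_normed_vector set \<Rightarrow> ('a \<Rightarrow> 'v) set" where
  "Aset M z Y = {f. lip0 M z Y f \<and> (\<exists>y. attains_toward M f y)}"

definition A_dense :: "'a metric \<Rightarrow> 'a \<Rightarrow> 'v::real_normed_vector set \<Rightarrow> bool" where
  "A_dense M z Y \<longleftrightarrow> (\<forall>f. lip0 M z Y f \<longrightarrow>
      (\<forall>e>0. \<exists>g\<in>Aset M z Y. lipnorm M (\<lambda>x. f x - g x) < e))"

text \<open>The metric space M "is a Banach space": its point set carries a real vector space
  structure whose induced norm d(x, zero) induces the metric (i.e. the metric is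
  translation invariant and absolutely homogeneous). Completeness is assumed separately.
  This is invariant under isometry, so it says M is isometric to a real Banach space
  (when M is complete).\<close>
definition is_normed_space_metric :: "'a metric \<Rightarrow> bool" where
  "is_normed_space_metric M \<longleftrightarrow> (\<exists>(add :: 'a \<Rightarrow> 'a \<Rightarrow> 'a) (sc :: real \<Rightarrow> 'a \<Rightarrow> 'a) zero.
     let S = mspace M in
     zero \<in> S \<and>
     (\<forall>x\<in>S. \<forall>y\<in>S. add x y \<in> S) \<and>
     (\<forall>a. \<forall>x\<in>S. sc a x \<in> S) \<and>
     (\<forall>x\<in>S. \<forall>y\<in>S. \<forall>w\<in>S. add (add x y) w = add x (add y w)) \<and>
     (\<forall>x\<in>S. \<forall>y\<in>S. add x y = add y x) \<and>
     (\<forall>x\<in>S. add zero x = x) \<and>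
     (\<forall>x\<in>S. \<exists>y\<in>S. add x y = zero) \<and>
     (\<forall>x\<in>S. sc 1 x = x) \<and>
     (\<forall>a b. \<forall>x\<in>S. sc a (sc b x) = sc (a * b) x) \<and>
     (\<forall>a b. \<forall>x\<in>S. sc (a + b) x = add (sc a x) (sc b x)) \<and>
     (\<forall>a. \<forall>x\<in>S. \<forall>y\<in>S. sc a (add x y) = add (sc a x) (sc a y)) \<and>
     (\<forall>x\<in>S. \<forall>y\<in>S. \<forall>w\<in>S. mdist M (add x w) (add y w) = mdist M x y) \<and>
     (\<forall>a. \<forall>x\<in>S. \<forall>y\<in>S. mdist M (sc a x) (sc a y) = \<bar>a\<bar> * mdist M x y))"

end

theory Submission
  imports Defs
begin

(* M is the segment of constant functions with values in [0,1] inside Y = C_b(R); being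
   bounded, it carries no normed-space structure.

   The map phi t = F t *R bump + wave t combines a bump at 0, scaled by the length F t of the
   part of [0,t] outside an open set U of measure at most 1/2 which contains an interval of
   length gamma(delta) in every subinterval of [0,1] of length delta, with an oscillating part
   wave t, which is (1/4)-Lipschitz in t.  Thus phi is Lipschitz, ||phi 1 - phi 0|| >= 1/2, but
   phi is only (1/4)-Lipschitz on the intervals of U.

   If ||phi - g||_Lip < 1/100, then ||g||_Lip > 0.26 while g is 0.26-Lipschitz on the
   intervals of U, so the difference quotients of g over pairs at distance >= delta stay
   uniformly below ||g||_Lip and any norming sequence of pairs must shrink.  But the difference
   quotients of wave at two scales differing by a factor 8 are 1/20 apart (evaluate at
   x = +-pi / |s - t|), so the difference quotients of g along such a sequence cannot
   converge. *)

lemma bdd_above_lipschitz_quotients: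
  assumes lip: "\<forall>p\<in>mspace M. \<forall>q\<in>mspace M. norm (f p - f q) \<le> K * mdist M p q"
  shows "bdd_above ({0} \<union> {norm (f p - f q) / mdist M p q |p q.
    p \<in> mspace M \<and> q \<in> mspace M \<and> p \<noteq> q})"
proof (rule bdd_aboveI[of _ "max 0 K"])
  fix r
  assume "r \<in> {0} \<union> {norm (f p - f q) / mdist M p q |p q. p \<in> mspace M \<and> q \<in> mspace M \<and> p \<noteq> q}"
  then consider "r = 0" | p q where "r = norm (f p - f q) / mdist M p q"
    "p \<in> mspace M" "q \<in> mspace M" "p \<noteq> q"
    by blast
  then show "r \<le> max 0 K"
  proof cases
    case 2
    then have "0 < mdist M p q"
      by (auto simp: less_le)
    moreover have "norm (f p - f q) \<le> max 0 K * mdist M p q"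
      using lip 2 by (meson max.cobounded2 mdist_nonneg mult_right_mono order_trans)
    ultimately show ?thesis
      using 2 by (simp add: divide_le_eq)
  qed simp
qed

lemma norm_diff_le_lipnorm:
  assumes lip: "\<forall>p\<in>mspace M. \<forall>q\<in>mspace M. norm (f p - f q) \<le> K * mdist M p q"
    and "p \<in> mspace M" "q \<in> mspace M"
  shows "norm (f p - f q) \<le> lipnorm M f * mdist M p q"
proof (cases "p = q")
  case False
  have "norm (f p - f q) / mdist M p q \<le> lipnorm M f"
    unfolding lipnorm_def
    by (rule cSup_upper[OF _ bdd_above_lipschitz_quotients[OF lip]]) (use assms(2,3) False in blast)
  moreover have "0 < mdist M p q"
    using assms(2,3) False by (auto simp: less_le)
  ultimately show ?thesis
    by (simp add: divide_le_eq)
next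
  case True
  with assms(3) have "mdist M p q = 0"
    by simp
  with True show ?thesis
    by simp
qed

lemma lipschitz_bound_diff:
  assumes "\<forall>p\<in>mspace M. \<forall>q\<in>mspace M. norm (f p - f q) \<le> K * mdist M p q"
    and "\<forall>p\<in>mspace M. \<forall>q\<in>mspace M. norm (g p - g q) \<le> K' * mdist M p q"
  shows "\<forall>p\<in>mspace M. \<forall>q\<in>mspace M. norm ((f p - g p) - (f q - g q)) \<le> (K + K') * mdist M p q"
proof (intro ballI)
  fix p q
  assume "p \<in> mspace M" "q \<in> mspace M"
  have "norm ((f p - g p) - (f q - g q)) \<le> norm (f p - f q) + norm (g p - g q)"
    using norm_triangle_ineq4[of "f p - f q" "g p - g q"] by (simp add: algebra_simps)
  also have "\<dots> \<le> K * mdist M p q + K' * mdist M p q"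
    using assms \<open>p \<in> mspace M\<close> \<open>q \<in> mspace M\<close> by (intro add_mono) auto
  finally show "norm ((f p - g p) - (f q - g q)) \<le> (K + K') * mdist M p q"
    by (simp add: distrib_right)
qed

lemma bounded_not_normed_space_metric:
  assumes bounded: "\<And>x y. x \<in> mspace M \<Longrightarrow> y \<in> mspace M \<Longrightarrow> mdist M x y \<le> B"
    and x: "x \<in> mspace M" and y: "y \<in> mspace M" and "x \<noteq> y"
  shows "\<not> is_normed_space_metric M"
proof
  assume "is_normed_space_metric M"
  then obtain sc :: "real \<Rightarrow> 'a \<Rightarrow> 'a" where
    sc: "\<forall>a. \<forall>x\<in>mspace M. sc a x \<in> mspace M" and
    hom: "\<forall>a. \<forall>x\<in>mspace M. \<forall>y\<in>mspace M. mdist M (sc a x) (sc a y) = \<bar>a\<bar> * mdist M x y"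
    unfolding is_normed_space_metric_def Let_def by (elim exE conjE) (rule that)
  have "mdist M x y \<noteq> 0"
    using x y \<open>x \<noteq> y\<close> by simp
  then have "mdist M (sc ((\<bar>B\<bar> + 1) / mdist M x y) x) (sc ((\<bar>B\<bar> + 1) / mdist M x y) y) = \<bar>B\<bar> + 1"
    using hom x y by simp
  moreover have "mdist M (sc ((\<bar>B\<bar> + 1) / mdist M x y) x) (sc ((\<bar>B\<bar> + 1) / mdist M x y) y) \<le> B"
    using bounded sc x y by blast
  ultimately show False
    by linarith
qed

lemma mcomplete_of_compact_submetric:
  fixes S :: "'a::metric_space set"
  assumes "compact S"
  shows "mcomplete_of (submetric euclidean_metric S)"
proof -
  interpret Submetric UNIV dist S
    by unfold_locales auto
  have "sub.mcomplete"
    using assms by (intro compactin_imp_mcomplete) simp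
  then show ?thesis
    by (simp add: mcomplete_of_def submetric_def)
qed

definition uncovered_length :: "real set \<Rightarrow> real \<Rightarrow> real" where
  "uncovered_length U t = measure lborel ({0..t} - U)"

lemma emeasure_lborel_subset_Icc_finite:
  fixes A :: "real set"
  assumes "A \<subseteq> {a..b}"
  shows "emeasure lborel A \<noteq> \<infinity>"
  using emeasure_bounded_finite[OF bounded_subset[OF bounded_closed_interval assms]] by simp

lemma uncovered_length_diff:
  assumes "U \<in> sets borel" "0 \<le> s" "s \<le> t"
  shows "uncovered_length U t - uncovered_length U s = measure lborel ({s<..t} - U)"
proof -
  have "{0..t} - U = ({0..s} - U) \<union> ({s<..t} - U)"
    using assms by auto
  moreover have "measure lborel (({0..s} - U) \<union> ({s<..t} - U))
      = measure lborel ({0..s} - U) + measure lborel ({s<..t} - U)"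
    using assms by (intro measure_Union emeasure_lborel_subset_Icc_finite[of _ 0 t]) auto
  ultimately show ?thesis
    unfolding uncovered_length_def by simp
qed

lemma uncovered_length_lipschitz:
  assumes "U \<in> sets borel" "0 \<le> s" "0 \<le> t"
  shows "\<bar>uncovered_length U s - uncovered_length U t\<bar> \<le> \<bar>s - t\<bar>"
proof -
  have "0 \<le> uncovered_length U b - uncovered_length U a \<and> uncovered_length U b - uncovered_length U a \<le> b - a"
    if "0 \<le> a" "a \<le> b" for a b
  proof -
    have "measure lborel ({a<..b} - U) \<le> measure lborel {a<..b}"
      using assms(1) that by (intro measure_mono_fmeasurable) (auto simp: fmeasurable_def)
    then show ?thesis
      using uncovered_length_diff[OF assms(1) that] that by simp
  qed
  from this[of s t] this[of t s] assms(2,3) show ?thesis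
    by (cases "s \<le> t") auto
qed

lemma uncovered_length_const:
  assumes "U \<in> sets borel" "0 \<le> s" "s \<le> t" "{s<..t} \<subseteq> U"
  shows "uncovered_length U t = uncovered_length U s"
proof -
  have "{s<..t} - U = {}"
    using assms(4) by blast
  with uncovered_length_diff[OF assms(1-3)] show ?thesis
    by (metis diff_eq_eq measure_empty add_0)
qed

lemma uncovered_length_0:
  assumes "U \<in> sets borel"
  shows "uncovered_length U 0 = 0"
proof -
  have "measure lborel ({0::real} - U) \<le> measure lborel {0::real}"
    using assms by (intro measure_mono_fmeasurable) (auto simp: fmeasurable_def)
  then show ?thesis
    by (simp add: uncovered_length_def antisym)
qed

lemma uncovered_length_ge:
  assumes "U \<in> sets borel" "emeasure lborel U \<le> ennreal c" "0 \<le> c" "0 \<le> t"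
  shows "t - c \<le> uncovered_length U t"
proof -
  have "ennreal t = emeasure lborel {0..t}"
    using assms(4) by simp
  also have "\<dots> \<le> emeasure lborel (({0..t} - U) \<union> U)"
    using assms(1) by (intro emeasure_mono) auto
  also have "\<dots> \<le> emeasure lborel ({0..t} - U) + emeasure lborel U"
    using assms(1) by (intro emeasure_subadditive) auto
  also have "emeasure lborel ({0..t} - U) = ennreal (uncovered_length U t)"
    unfolding uncovered_length_def using assms(1)
    by (intro emeasure_eq_ennreal_measure) (use emeasure_lborel_subset_Icc_finite[of _ 0 t] in auto)
  also have "ennreal (uncovered_length U t) + emeasure lborel U \<le> ennreal (uncovered_length U t + c)"
    using assms(2,3) by (simp add: ennreal_plus uncovered_length_def add_left_mono)
  finally have "t \<le> uncovered_length U t + c"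
    using ennreal_le_iff[of "uncovered_length U t + c" t] assms(3)
    by (simp add: uncovered_length_def del: ennreal_le_iff ennreal_plus)
  then show ?thesis
    by simp
qed

definition dyadic_interval :: "nat \<Rightarrow> nat \<Rightarrow> real set" where
  "dyadic_interval j k = {real k / 2^j - 1 / (16 * 4^j) <..< real k / 2^j + 1 / (16 * 4^j)}"

definition dyadic_nbhd :: "real set" where
  "dyadic_nbhd = (\<Union>j. \<Union>k\<le>(2::nat)^j. dyadic_interval j k)"

lemma dyadic_nbhd_borel: "dyadic_nbhd \<in> sets borel"
  unfolding dyadic_nbhd_def dyadic_interval_def
  by (intro borel_open open_UN ballI open_greaterThanLessThan)

lemma emeasure_dyadic_nbhd: "emeasure lborel dyadic_nbhd \<le> ennreal (1/2)"
proof -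
  have level: "emeasure lborel (\<Union>k\<le>(2::nat)^j. dyadic_interval j k) \<le> ennreal ((1/2)^j / 4)"
    for j :: nat
  proof -
    have "emeasure lborel (\<Union>k\<le>(2::nat)^j. dyadic_interval j k)
        \<le> (\<Sum>k\<le>(2::nat)^j. ennreal (2 / (16 * 4^j)))"
      unfolding dyadic_interval_def by (rule order_trans[OF emeasure_subadditive_finite]) auto
    also have "\<dots> = ennreal (\<Sum>k\<le>(2::nat)^j. 2 / (16 * 4^j))"
      by (rule sum_ennreal) simp
    also have "\<dots> \<le> ennreal ((1/2)^j / 4)"
    proof (rule ennreal_leI)
      have "(4::real)^j = 2^j * 2^j"
        by (simp flip: power_mult_distrib)
      moreover have "(1::real) \<le> 2^j"
        by simp
      ultimately show "(\<Sum>k\<le>(2::nat)^j. 2 / (16 * 4^j)) \<le> (1/2::real)^j / 4"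
        by (simp add: field_simps)
    qed
    finally show ?thesis .
  qed
  have "(\<lambda>j. (1/2::real)^j / 4) sums (1/2)"
    using geometric_sums[of "1/2::real"] sums_divide[of _ _ 4] by fastforce
  then have "(\<Sum>j. ennreal ((1/2::real)^j / 4)) = ennreal (1/2)"
    by (intro suminf_ennreal_eq) auto
  moreover have "emeasure lborel dyadic_nbhd \<le> (\<Sum>j. ennreal ((1/2::real)^j / 4))"
    unfolding dyadic_nbhd_def
    by (rule order_trans[OF emeasure_subadditive_countably suminf_le[OF level]])
      (auto simp: dyadic_interval_def)
  ultimately show ?thesis
    by simp
qed

lemma dyadic_above:
  assumes "0 \<le> s"
  obtains k :: nat where "s < real k / 2^j" "real k / 2^j \<le> s + 1 / 2^j"
proof -
  have "real (nat \<lfloor>s * 2^j\<rfloor> + 1) = of_int \<lfloor>s * 2^j\<rfloor> + 1"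
    using assms by simp
  then have "s * 2^j < real (nat \<lfloor>s * 2^j\<rfloor> + 1)" "real (nat \<lfloor>s * 2^j\<rfloor> + 1) \<le> s * 2^j + 1"
    by linarith+
  then show ?thesis
    by (intro that[of "nat \<lfloor>s * 2^j\<rfloor> + 1"]) (simp_all add: field_simps)
qed

definition uniformly_interval_dense :: "real set \<Rightarrow> bool" where
  "uniformly_interval_dense U \<longleftrightarrow> (\<forall>\<delta>>0. \<exists>\<gamma>>0. \<forall>s t. 0 \<le> s \<longrightarrow> t \<le> 1 \<longrightarrow> s + \<delta> \<le> t \<longrightarrow>
     (\<exists>a. s \<le> a \<and> a + \<gamma> \<le> t \<and> {a<..a + \<gamma>} \<subseteq> U))"

lemma uniformly_interval_dense_dyadic_nbhd: "uniformly_interval_dense dyadic_nbhd"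
  unfolding uniformly_interval_dense_def
proof (intro allI impI)
  fix \<delta> :: real
  assume "\<delta> > 0"
  then obtain j :: nat where j: "1 / 2^j < \<delta> / 2"
    using real_arch_pow_inv[of "\<delta> / 2" "1/2"] by (auto simp: power_one_over)
  define r where "r = 1 / (16 * 4^j :: real)"
  have "(2::real)^j \<le> 16 * 4^j"
    using power_mono[of "2::real" 4 j] zero_le_power[of "4::real" j] by linarith
  then have r: "0 < r" "r \<le> 1 / 2^j"
    unfolding r_def by (auto intro: divide_left_mono)
  show "\<exists>\<gamma>>0. \<forall>s t. 0 \<le> s \<longrightarrow> t \<le> 1 \<longrightarrow> s + \<delta> \<le> t \<longrightarrow>
      (\<exists>a. s \<le> a \<and> a + \<gamma> \<le> t \<and> {a<..a + \<gamma>} \<subseteq> dyadic_nbhd)"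
  proof (rule exI[of _ "r / 2"], intro conjI allI impI)
    fix s t :: real
    assume "0 \<le> s" "t \<le> 1" "s + \<delta> \<le> t"
    obtain k where k: "s < real k / 2^j" "real k / 2^j \<le> s + 1 / 2^j"
      using dyadic_above[OF \<open>0 \<le> s\<close>] .
    then have "real k / 2^j < 1"
      using j r \<open>t \<le> 1\<close> \<open>s + \<delta> \<le> t\<close> by linarith
    then have "real k < real (2^j)"
      by (simp add: field_simps)
    then have "dyadic_interval j k \<subseteq> dyadic_nbhd"
      unfolding dyadic_nbhd_def of_nat_less_iff by fastforce
    moreover have "{real k / 2^j <.. real k / 2^j + r / 2} \<subseteq> dyadic_interval j k"
      using r by (auto simp: dyadic_interval_def r_def)
    ultimately show "\<exists>a. s \<le> a \<and> a + r / 2 \<le> t \<and> {a<..a + r / 2} \<subseteq> dyadic_nbhd"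
      using k j r \<open>s + \<delta> \<le> t\<close> by (intro exI[of _ "real k / 2^j"]) auto
  qed (use r in simp)
qed

lemma norm_diff_le_across_slow_interval:
  fixes G :: "real \<Rightarrow> 'a::real_normed_vector"
  assumes lip: "\<And>a b. a \<in> {0..1} \<Longrightarrow> b \<in> {0..1} \<Longrightarrow> norm (G a - G b) \<le> L * \<bar>a - b\<bar>"
    and slow: "norm (G (a + \<gamma>) - G a) \<le> c * \<gamma>"
    and "0 \<le> s" "s \<le> a" "0 \<le> \<gamma>" "a + \<gamma> \<le> t" "t \<le> 1"
  shows "norm (G t - G s) \<le> L * (t - s) - (L - c) * \<gamma>"
proof -
  have "G t - G s = (G t - G (a + \<gamma>)) + (G (a + \<gamma>) - G a) + (G a - G s)"
    by simp
  then have "norm (G t - G s) \<le> norm (G t - G (a + \<gamma>)) + norm (G (a + \<gamma>) - G a) + norm (G a - G s)"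
    by (metis norm_triangle_le norm_triangle_ineq add_right_mono)
  also have "\<dots> \<le> L * (t - (a + \<gamma>)) + c * \<gamma> + L * (a - s)"
    using lip[of t "a + \<gamma>"] lip[of a s] slow assms(3-7) by (intro add_mono) auto
  also have "\<dots> = L * (t - s) - (L - c) * \<gamma>"
    by (simp add: algebra_simps)
  finally show ?thesis .
qed

lemma far_difference_quotients_le:
  fixes G :: "real \<Rightarrow> 'a::real_normed_vector"
  assumes lip: "\<And>a b. a \<in> {0..1} \<Longrightarrow> b \<in> {0..1} \<Longrightarrow> norm (G a - G b) \<le> L * \<bar>a - b\<bar>"
    and slow: "\<And>a b. 0 \<le> a \<Longrightarrow> a \<le> b \<Longrightarrow> b \<le> 1 \<Longrightarrow> {a<..b} \<subseteq> U \<Longrightarrow>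
      norm (G b - G a) \<le> c * (b - a)"
    and "c < L" "uniformly_interval_dense U" "\<delta> > 0"
  obtains \<kappa> where "\<kappa> > 0"
    "\<And>a b. a \<in> {0..1} \<Longrightarrow> b \<in> {0..1} \<Longrightarrow> \<delta> \<le> \<bar>a - b\<bar> \<Longrightarrow>
      norm (G a - G b) \<le> (L - \<kappa>) * \<bar>a - b\<bar>"
proof -
  obtain \<gamma> where "\<gamma> > 0" and gap: "\<And>s t. 0 \<le> s \<Longrightarrow> t \<le> 1 \<Longrightarrow> s + \<delta> \<le> t \<Longrightarrow>
      \<exists>a. s \<le> a \<and> a + \<gamma> \<le> t \<and> {a<..a + \<gamma>} \<subseteq> U"
    using assms(4,5) unfolding uniformly_interval_dense_def by meson
  define \<kappa> where "\<kappa> = (L - c) * \<gamma>"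
  have "\<kappa> > 0"
    using \<open>\<gamma> > 0\<close> \<open>c < L\<close> by (simp add: \<kappa>_def)
  have ordered: "norm (G t - G s) \<le> (L - \<kappa>) * (t - s)"
    if st: "0 \<le> s" "t \<le> 1" "s + \<delta> \<le> t" for s t
  proof -
    obtain a where a: "s \<le> a" "a + \<gamma> \<le> t" "{a<..a + \<gamma>} \<subseteq> U"
      using gap[OF st] by blast
    have "norm (G (a + \<gamma>) - G a) \<le> c * \<gamma>"
      using slow[of a "a + \<gamma>"] a st \<open>\<gamma> > 0\<close> by simp
    then have "norm (G t - G s) \<le> L * (t - s) - \<kappa>"
      unfolding \<kappa>_def using a st \<open>\<gamma> > 0\<close> by (intro norm_diff_le_across_slow_interval[OF lip]) auto
    also have "\<dots> \<le> (L - \<kappa>) * (t - s)"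
      using \<open>\<kappa> > 0\<close> st mult_left_mono[of "t - s" 1 \<kappa>] by (simp add: algebra_simps)
    finally show ?thesis .
  qed
  show ?thesis
  proof (rule that[OF \<open>\<kappa> > 0\<close>])
    fix a b :: real
    assume "a \<in> {0..1}" "b \<in> {0..1}" "\<delta> \<le> \<bar>a - b\<bar>"
    then show "norm (G a - G b) \<le> (L - \<kappa>) * \<bar>a - b\<bar>"
      using ordered[of a b] ordered[of b a] by (cases "a \<le> b") (auto simp: norm_minus_commute)
  qed
qed

lemma norming_steps_tendsto_zero:
  fixes G :: "real \<Rightarrow> 'a::real_normed_vector"
  assumes lip: "\<And>a b. a \<in> {0..1} \<Longrightarrow> b \<in> {0..1} \<Longrightarrow> norm (G a - G b) \<le> L * \<bar>a - b\<bar>"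
    and slow: "\<And>a b. 0 \<le> a \<Longrightarrow> a \<le> b \<Longrightarrow> b \<le> 1 \<Longrightarrow> {a<..b} \<subseteq> U \<Longrightarrow>
      norm (G b - G a) \<le> c * (b - a)"
    and "c < L" "uniformly_interval_dense U"
    and ab: "\<And>n. a n \<in> {0..1}" "\<And>n. b n \<in> {0..1}" "\<And>n. a n \<noteq> b n"
    and norming: "(\<lambda>n. norm (G (a n) - G (b n)) / \<bar>a n - b n\<bar>) \<longlonglongrightarrow> L"
  shows "(\<lambda>n. \<bar>a n - b n\<bar>) \<longlonglongrightarrow> 0"
proof (rule tendstoI)
  fix \<delta> :: real
  assume "\<delta> > 0"
  then obtain \<kappa> where "\<kappa> > 0" and far: "\<And>a b. a \<in> {0..1} \<Longrightarrow> b \<in> {0..1} \<Longrightarrow>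
      \<delta> \<le> \<bar>a - b\<bar> \<Longrightarrow> norm (G a - G b) \<le> (L - \<kappa>) * \<bar>a - b\<bar>"
    using far_difference_quotients_le[OF lip slow assms(3,4)] by blast
  have "\<forall>\<^sub>F n in sequentially. L - \<kappa> < norm (G (a n) - G (b n)) / \<bar>a n - b n\<bar>"
    using norming \<open>\<kappa> > 0\<close> by (intro order_tendstoD(1)) auto
  then show "\<forall>\<^sub>F n in sequentially. dist \<bar>a n - b n\<bar> 0 < \<delta>"
  proof (rule eventually_mono)
    fix n
    assume "L - \<kappa> < norm (G (a n) - G (b n)) / \<bar>a n - b n\<bar>"
    moreover have "0 < \<bar>a n - b n\<bar>"
      using ab(3)[of n] by simp
    ultimately show "dist \<bar>a n - b n\<bar> 0 < \<delta>"
      using far[OF ab(1,2), of n n] by (force simp: field_simps)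
  qed
qed

lemma abs_sin_diff_le: "\<bar>sin x - sin y\<bar> \<le> \<bar>x - y :: real\<bar>"
proof -
  have "\<bar>sin x - sin y\<bar> = 2 * \<bar>sin ((x - y) / 2)\<bar> * \<bar>cos ((x + y) / 2)\<bar>"
    by (simp add: sin_diff_sin abs_mult)
  also have "\<dots> \<le> 2 * \<bar>(x - y) / 2\<bar> * 1"
    by (intro mult_mono abs_sin_x_le_abs_x abs_cos_le_one) auto
  finally show ?thesis
    by simp
qed

lemma abs_cos_diff_le: "\<bar>cos x - cos y\<bar> \<le> \<bar>x - y :: real\<bar>"
proof -
  have "\<bar>cos x - cos y\<bar> = 2 * \<bar>sin ((x + y) / 2)\<bar> * \<bar>sin ((y - x) / 2)\<bar>"
    by (simp add: cos_diff_cos abs_mult)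
  also have "\<dots> \<le> 2 * 1 * \<bar>(y - x) / 2\<bar>"
    by (intro mult_mono abs_sin_x_le_abs_x abs_sin_le_one) auto
  finally show ?thesis
    by simp
qed

lemma abs_sin_ge_half_or_abs_cos_ge_half: "1/2 \<le> \<bar>sin x\<bar> \<or> 1/2 \<le> \<bar>cos (x :: real)\<bar>"
proof (rule ccontr)
  assume "\<not> ?thesis"
  then have "\<bar>sin x\<bar> * \<bar>sin x\<bar> < 1/4" "\<bar>cos x\<bar> * \<bar>cos x\<bar> < 1/4"
    using mult_strict_mono[of "\<bar>sin x\<bar>" "1/2" "\<bar>sin x\<bar>" "1/2"]
      mult_strict_mono[of "\<bar>cos x\<bar>" "1/2" "\<bar>cos x\<bar>" "1/2"] by auto
  then show False
    using sin_cos_squared_add[of x] by (simp add: power2_eq_square)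
qed

definition bump :: "real \<Rightarrow>\<^sub>C real" where
  "bump = Bcontfun (\<lambda>x. max 0 (1 - \<bar>x\<bar>))"

lemma bump_apply: "apply_bcontfun bump x = max 0 (1 - \<bar>x\<bar>)"
proof -
  have "(\<lambda>x::real. max 0 (1 - \<bar>x\<bar>)) \<in> bcontfun"
    by (rule bcontfun_normI[where b = 1]) (auto intro!: continuous_intros)
  then show ?thesis
    by (simp add: bump_def Bcontfun_inverse)
qed

lemma norm_bump: "norm bump \<le> 1"
  by (rule norm_bound) (simp add: bump_apply)

(* For |x| >= 1 this is the imaginary part of (exp (i t x) - 1) / (4 |x|) on the positive and its
   real part on the negative half-line. *)
definition wave :: "real \<Rightarrow> real \<Rightarrow>\<^sub>C real" where
  "wave t = Bcontfun (\<lambda>x. (sin (t * max x 0) + cos (t * min x 0) - 1) / (4 * max 1 \<bar>x\<bar>))"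

lemma wave_apply:
  "apply_bcontfun (wave t) x = (sin (t * max x 0) + cos (t * min x 0) - 1) / (4 * max 1 \<bar>x\<bar>)"
proof -
  have "\<bar>sin (t * max x 0) + cos (t * min x 0) - 1\<bar> \<le> 3" for x
    using abs_sin_le_one[of "t * max x 0"] abs_cos_le_one[of "t * min x 0"]
    unfolding abs_le_iff by linarith
  then have "\<bar>sin (t * max x 0) + cos (t * min x 0) - 1\<bar> / (4 * max 1 \<bar>x\<bar>) \<le> 3" for x
    by (simp add: divide_le_eq) (smt (verit) max.cobounded1)
  then have "(\<lambda>x. (sin (t * max x 0) + cos (t * min x 0) - 1) / (4 * max 1 \<bar>x\<bar>)) \<in> bcontfun"
    by (intro bcontfun_normI[where b = 3] continuous_intros) (auto simp: abs_divide)
  then show ?thesis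
    by (simp add: wave_def Bcontfun_inverse)
qed

lemma wave_0: "wave 0 = 0"
  by (rule bcontfun_eqI) (simp add: wave_apply)

lemma wave_apply_pos: "1 \<le> x \<Longrightarrow> apply_bcontfun (wave t) x = sin (t * x) / (4 * x)"
  by (simp add: wave_apply)

lemma wave_apply_neg: "1 \<le> x \<Longrightarrow> apply_bcontfun (wave t) (- x) = (cos (t * x) - 1) / (4 * x)"
  by (simp add: wave_apply)

lemma norm_wave_diff: "norm (wave s - wave t) \<le> \<bar>s - t\<bar> / 4"
proof (rule norm_bound)
  fix x :: real
  have "\<bar>sin (s * max x 0) - sin (t * max x 0)\<bar> + \<bar>cos (s * min x 0) - cos (t * min x 0)\<bar>
      \<le> \<bar>s * max x 0 - t * max x 0\<bar> + \<bar>s * min x 0 - t * min x 0\<bar>"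
    by (intro add_mono abs_sin_diff_le abs_cos_diff_le)
  also have "\<dots> = \<bar>s - t\<bar> * \<bar>x\<bar>"
    by (simp add: abs_mult flip: left_diff_distrib) (simp add: max_def min_def)
  also have "\<dots> \<le> \<bar>s - t\<bar> * max 1 \<bar>x\<bar>"
    by (intro mult_left_mono) auto
  finally have "\<bar>(sin (s * max x 0) - sin (t * max x 0)) + (cos (s * min x 0) - cos (t * min x 0))\<bar>
      \<le> \<bar>s - t\<bar> * max 1 \<bar>x\<bar>"
    by (rule order_trans[OF abs_triangle_ineq])
  then have bound: "\<bar>(sin (s * max x 0) - sin (t * max x 0)) + (cos (s * min x 0) - cos (t * min x 0))\<bar>
      / (4 * max 1 \<bar>x\<bar>) \<le> \<bar>s - t\<bar> / 4"
    by (simp add: divide_le_eq)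
  have eq: "apply_bcontfun (wave s - wave t) x =
      ((sin (s * max x 0) - sin (t * max x 0)) + (cos (s * min x 0) - cos (t * min x 0)))
      / (4 * max 1 \<bar>x\<bar>)"
    by (simp add: wave_apply diff_divide_distrib[symmetric])
  have "\<bar>4 * max 1 \<bar>x\<bar>\<bar> = 4 * max 1 \<bar>x\<bar>"
    by simp
  then show "norm (apply_bcontfun (wave s - wave t) x) \<le> \<bar>s - t\<bar> / 4"
    unfolding real_norm_def eq abs_divide by (simp only: bound)
qed

definition phi :: "real \<Rightarrow> real \<Rightarrow>\<^sub>C real" where
  "phi t = uncovered_length dyadic_nbhd t *\<^sub>R bump + wave t"

lemma phi_0: "phi 0 = 0"
  by (simp add: phi_def uncovered_length_0[OF dyadic_nbhd_borel] wave_0)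

lemma phi_diff:
  "phi s - phi t = (uncovered_length dyadic_nbhd s - uncovered_length dyadic_nbhd t) *\<^sub>R bump
     + (wave s - wave t)"
  by (simp add: phi_def algebra_simps)

lemma norm_phi_diff_le:
  assumes "0 \<le> s" "0 \<le> t"
  shows "norm (phi s - phi t) \<le> 2 * \<bar>s - t\<bar>"
proof -
  have "norm (phi s - phi t)
      \<le> \<bar>uncovered_length dyadic_nbhd s - uncovered_length dyadic_nbhd t\<bar> * norm bump + \<bar>s - t\<bar> / 4"
    unfolding phi_diff using norm_triangle_ineq norm_wave_diff[of s t] by (fastforce intro: order_trans)
  also have "\<dots> \<le> \<bar>s - t\<bar> * 1 + \<bar>s - t\<bar> / 4"
    using uncovered_length_lipschitz[OF dyadic_nbhd_borel assms] norm_bump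
    by (intro add_mono mult_mono) auto
  also have "\<dots> \<le> 2 * \<bar>s - t\<bar>"
    by simp
  finally show ?thesis .
qed

lemma norm_phi_diff_flat:
  assumes "0 \<le> a" "a \<le> b" "{a<..b} \<subseteq> dyadic_nbhd"
  shows "norm (phi b - phi a) \<le> (b - a) / 4"
  using norm_wave_diff[of b a] assms
  by (simp add: phi_diff uncovered_length_const[OF dyadic_nbhd_borel assms])

lemma norm_phi_1_ge: "1/2 \<le> norm (phi 1 - phi 0)"
proof -
  have "1 - 1/2 \<le> uncovered_length dyadic_nbhd 1"
    using emeasure_dyadic_nbhd by (intro uncovered_length_ge dyadic_nbhd_borel) auto
  also have "\<dots> = apply_bcontfun (phi 1 - phi 0) 0"
    by (simp add: phi_def bump_apply wave_apply uncovered_length_0[OF dyadic_nbhd_borel])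
  also have "\<dots> \<le> norm (phi 1 - phi 0)"
    using norm_bounded[of "phi 1 - phi 0" 0] by simp
  finally show ?thesis
    by simp
qed

lemma phi_quotient_apply:
  assumes "1 \<le> w"
  shows "apply_bcontfun ((phi p - phi q) /\<^sub>R \<bar>p - q\<bar>) w = (sin (p * w) - sin (q * w)) / (4 * w * \<bar>p - q\<bar>)"
    and "apply_bcontfun ((phi p - phi q) /\<^sub>R \<bar>p - q\<bar>) (- w) = (cos (p * w) - cos (q * w)) / (4 * w * \<bar>p - q\<bar>)"
  using assms by (simp_all add: phi_def bump_apply wave_apply_pos wave_apply_neg divide_simps)

lemma phi_quotient_small:
  assumes "1 \<le> w" "8 * pi \<le> w * \<bar>s - t\<bar>"
  shows "\<bar>apply_bcontfun ((phi s - phi t) /\<^sub>R \<bar>s - t\<bar>) w\<bar> \<le> 1 / (16 * pi)"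
    and "\<bar>apply_bcontfun ((phi s - phi t) /\<^sub>R \<bar>s - t\<bar>) (- w)\<bar> \<le> 1 / (16 * pi)"
proof -
  have bound: "\<bar>(c - c') / (4 * w * \<bar>s - t\<bar>)\<bar> \<le> 1 / (16 * pi)" if "\<bar>c\<bar> \<le> 1" "\<bar>c'\<bar> \<le> 1" for c c'
  proof -
    have "\<bar>(c - c') / (4 * w * \<bar>s - t\<bar>)\<bar> = \<bar>c - c'\<bar> / (4 * (w * \<bar>s - t\<bar>))"
      using assms(1) by (simp add: abs_divide abs_mult)
    also have "\<dots> \<le> 2 / (4 * (8 * pi))"
      using that assms(2) pi_gt_zero by (intro frac_le) auto
    finally show ?thesis
      by simp
  qed
  show "\<bar>apply_bcontfun ((phi s - phi t) /\<^sub>R \<bar>s - t\<bar>) w\<bar> \<le> 1 / (16 * pi)"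
    unfolding phi_quotient_apply[OF assms(1)] by (intro bound abs_sin_le_one)
  show "\<bar>apply_bcontfun ((phi s - phi t) /\<^sub>R \<bar>s - t\<bar>) (- w)\<bar> \<le> 1 / (16 * pi)"
    unfolding phi_quotient_apply[OF assms(1)] by (intro bound abs_cos_le_one)
qed

lemma phi_quotient_large:
  assumes "1 \<le> w" "w * \<bar>s - t\<bar> = pi"
  shows "1 / (4 * pi) \<le> \<bar>apply_bcontfun ((phi s - phi t) /\<^sub>R \<bar>s - t\<bar>) w\<bar> \<or>
    1 / (4 * pi) \<le> \<bar>apply_bcontfun ((phi s - phi t) /\<^sub>R \<bar>s - t\<bar>) (- w)\<bar>"
proof -
  have "s * w = t * w + pi \<or> s * w = t * w - pi"
    using assms(2) by (cases "s \<le> t") (auto simp: algebra_simps)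
  then have "\<bar>sin (s * w) - sin (t * w)\<bar> = 2 * \<bar>sin (t * w)\<bar>"
    "\<bar>cos (s * w) - cos (t * w)\<bar> = 2 * \<bar>cos (t * w)\<bar>"
    by auto
  with abs_sin_ge_half_or_abs_cos_ge_half[of "t * w"] show ?thesis
    unfolding phi_quotient_apply[OF assms(1)]
    using pi_gt_zero by (auto simp: abs_divide assms(2) mult.assoc divide_simps)
qed

lemma phi_difference_quotients_apart:
  assumes "s' \<noteq> t'" "\<bar>s' - t'\<bar> \<le> 1" "8 * \<bar>s' - t'\<bar> \<le> \<bar>s - t\<bar>"
  shows "1/20 \<le> norm ((phi s - phi t) /\<^sub>R \<bar>s - t\<bar> - (phi s' - phi t') /\<^sub>R \<bar>s' - t'\<bar>)"
    (is "_ \<le> norm (?Q - ?Q')")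
proof -
  define w where "w = pi / \<bar>s' - t'\<bar>"
  have "0 < \<bar>s' - t'\<bar>"
    using assms(1) by simp
  then have wl': "w * \<bar>s' - t'\<bar> = pi" and "pi \<le> w"
    using assms(2) by (simp_all add: w_def le_divide_eq)
  then have "1 \<le> w"
    using pi_gt3 by linarith
  have "8 * pi = w * (8 * \<bar>s' - t'\<bar>)"
    using wl' by simp
  also have "\<dots> \<le> w * \<bar>s - t\<bar>"
    using assms(3) \<open>1 \<le> w\<close> by (intro mult_left_mono) auto
  finally have "8 * pi \<le> w * \<bar>s - t\<bar>" .
  obtain x where x: "1 / (4 * pi) \<le> \<bar>apply_bcontfun ?Q' x\<bar>" "\<bar>apply_bcontfun ?Q x\<bar> \<le> 1 / (16 * pi)"
    using phi_quotient_large[OF \<open>1 \<le> w\<close> wl'] phi_quotient_small[OF \<open>1 \<le> w\<close> \<open>8 * pi \<le> w * \<bar>s - t\<bar>\<close>]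
    by blast
  have "\<bar>apply_bcontfun ?Q' x\<bar> - \<bar>apply_bcontfun ?Q x\<bar> \<le> norm (?Q - ?Q')"
    using abs_triangle_ineq2_sym[of "apply_bcontfun ?Q' x" "apply_bcontfun ?Q x"]
      norm_bounded[of "?Q - ?Q'" x] by simp
  moreover have "1/20 \<le> 1 / (4 * pi) - 1 / (16 * pi)"
    using pi_approx(2) pi_gt_zero by (simp add: field_simps)
  ultimately show ?thesis
    using x by linarith
qed

lemma norming_steps_near_phi_tendsto_zero:
  fixes G :: "real \<Rightarrow> real \<Rightarrow>\<^sub>C real"
  assumes lip: "\<And>a b. a \<in> {0..1} \<Longrightarrow> b \<in> {0..1} \<Longrightarrow> norm (G a - G b) \<le> L * \<bar>a - b\<bar>"
    and near: "\<And>a b. a \<in> {0..1} \<Longrightarrow> b \<in> {0..1} \<Longrightarrow>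
      norm ((phi a - G a) - (phi b - G b)) \<le> \<bar>a - b\<bar> / 100"
    and ab: "\<And>n. a n \<in> {0..1}" "\<And>n. b n \<in> {0..1}" "\<And>n. a n \<noteq> b n"
    and norming: "(\<lambda>n. norm (G (a n) - G (b n)) / \<bar>a n - b n\<bar>) \<longlonglongrightarrow> L"
  shows "(\<lambda>n. \<bar>a n - b n\<bar>) \<longlonglongrightarrow> 0"
proof -
  have near_phi: "norm (G a - G b) \<le> norm (phi a - phi b) + \<bar>a - b\<bar> / 100"
    "norm (phi a - phi b) \<le> norm (G a - G b) + \<bar>a - b\<bar> / 100"
    if "a \<in> {0..1}" "b \<in> {0..1}" for a b
    using near[OF that] norm_triangle_ineq4[of "phi a - phi b" "(phi a - G a) - (phi b - G b)"]
      norm_triangle_ineq[of "G a - G b" "(phi a - G a) - (phi b - G b)"]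
    by (simp_all add: algebra_simps)
  have "26/100 < L"
    using norm_phi_1_ge near_phi(2)[of 1 0] lip[of 1 0] by simp
  moreover have "norm (G b - G a) \<le> 26/100 * (b - a)"
    if "0 \<le> a" "a \<le> b" "b \<le> 1" "{a<..b} \<subseteq> dyadic_nbhd" for a b
  proof -
    have "norm (G b - G a) \<le> (b - a) / 4 + \<bar>b - a\<bar> / 100"
      using that by (intro order_trans[OF near_phi(1) add_right_mono[OF norm_phi_diff_flat]]) auto
    also have "\<dots> = 26/100 * (b - a)"
      using that by simp
    finally show ?thesis .
  qed
  ultimately show ?thesis
    using norming_steps_tendsto_zero[OF lip _ _ uniformly_interval_dense_dyadic_nbhd ab norming]
    by blast
qed

lemma difference_quotient_near_phi:
  fixes G :: "real \<Rightarrow> real \<Rightarrow>\<^sub>C real"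
  assumes near: "norm ((phi a - G a) - (phi b - G b)) \<le> \<bar>a - b\<bar> / 100"
  shows "norm ((phi a - phi b) /\<^sub>R \<bar>a - b\<bar> - (G a - G b) /\<^sub>R \<bar>a - b\<bar>) \<le> 1/100"
proof -
  have "(phi a - phi b) /\<^sub>R \<bar>a - b\<bar> - (G a - G b) /\<^sub>R \<bar>a - b\<bar>
      = ((phi a - G a) - (phi b - G b)) /\<^sub>R \<bar>a - b\<bar>"
    by (simp add: algebra_simps flip: scaleR_diff_right)
  then show ?thesis
    using near by (cases "a = b") (simp_all add: divide_simps)
qed

lemma no_norming_sequence_near_phi:
  fixes G :: "real \<Rightarrow> real \<Rightarrow>\<^sub>C real"
  assumes lip: "\<And>a b. a \<in> {0..1} \<Longrightarrow> b \<in> {0..1} \<Longrightarrow> norm (G a - G b) \<le> L * \<bar>a - b\<bar>"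
    and near: "\<And>a b. a \<in> {0..1} \<Longrightarrow> b \<in> {0..1} \<Longrightarrow>
      norm ((phi a - G a) - (phi b - G b)) \<le> \<bar>a - b\<bar> / 100"
    and ab: "\<And>n. a n \<in> {0..1}" "\<And>n. b n \<in> {0..1}" "\<And>n. a n \<noteq> b n"
    and lim: "(\<lambda>n. (G (a n) - G (b n)) /\<^sub>R \<bar>a n - b n\<bar>) \<longlonglongrightarrow> y"
    and "norm y = L"
  shows False
proof -
  have "(\<lambda>n. norm (G (a n) - G (b n)) / \<bar>a n - b n\<bar>) \<longlonglongrightarrow> L"
    using tendsto_norm[OF lim] \<open>norm y = L\<close> by (simp add: divide_inverse_commute)
  from norming_steps_near_phi_tendsto_zero[OF lip near ab this]
  have steps: "(\<lambda>n. \<bar>a n - b n\<bar>) \<longlonglongrightarrow> 0" .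
  define u where "u n = (phi (a n) - phi (b n)) /\<^sub>R \<bar>a n - b n\<bar>" for n
  define v where "v n = (G (a n) - G (b n)) /\<^sub>R \<bar>a n - b n\<bar>" for n
  have uv: "norm (u n - v n) \<le> 1/100" for n
    unfolding u_def v_def by (rule difference_quotient_near_phi[OF near[OF ab(1,2)]])
  have "\<forall>\<^sub>F n in sequentially. dist (v n) y < 1/100"
    using lim unfolding v_def by (intro tendstoD) auto
  then obtain N where N: "\<And>n. N \<le> n \<Longrightarrow> dist (v n) y < 1/100"
    unfolding eventually_sequentially by blast
  have "0 < \<bar>a N - b N\<bar> / 8"
    using ab(3)[of N] by simp
  with steps have "\<forall>\<^sub>F n in sequentially. \<bar>a n - b n\<bar> < \<bar>a N - b N\<bar> / 8"
    by (rule order_tendstoD(2))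
  then obtain m where "N \<le> m" "\<bar>a m - b m\<bar> < \<bar>a N - b N\<bar> / 8"
    unfolding eventually_sequentially by (meson nat_le_linear)
  then have "1/20 \<le> norm (u N - u m)"
    unfolding u_def using ab(1,2)[of m] ab(3) by (intro phi_difference_quotients_apart) (auto simp: abs_le_iff)
  moreover have "norm (u N - u m) \<le> 1/100 + 2/100 + 1/100"
  proof (rule norm_diff_triangle_le[OF norm_diff_triangle_le])
    show "norm (u N - v N) \<le> 1/100"
      by (rule uv)
    show "norm (v N - v m) \<le> 2/100"
      using dist_triangle_less_add[OF N[of N] N[OF \<open>N \<le> m\<close>]] by (simp add: dist_norm)
    show "norm (v m - u m) \<le> 1/100"
      using uv[of m] by (simp add: norm_minus_commute)
  qed
  ultimately show False
    by simp
qed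

lemma dist_const_bcontfun:
  "dist (const_bcontfun p :: 'a::topological_space \<Rightarrow>\<^sub>C 'b::metric_space) (const_bcontfun q) = dist p q"
proof (rule antisym)
  show "dist (const_bcontfun p :: 'a \<Rightarrow>\<^sub>C 'b) (const_bcontfun q) \<le> dist p q"
    by (rule dist_bound) simp
  show "dist p q \<le> dist (const_bcontfun p :: 'a \<Rightarrow>\<^sub>C 'b) (const_bcontfun q)"
    using dist_bounded[of "const_bcontfun p :: 'a \<Rightarrow>\<^sub>C 'b" undefined "const_bcontfun q"] by simp
qed

definition const_unit_interval :: "(real \<Rightarrow>\<^sub>C real) metric" where
  "const_unit_interval = submetric euclidean_metric (const_bcontfun ` {0..1})"

lemma mspace_const_unit_interval: "mspace const_unit_interval = const_bcontfun ` {0..1}"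
  by (simp add: const_unit_interval_def)

lemma mdist_const_unit_interval: "mdist const_unit_interval = dist"
  by (simp add: const_unit_interval_def)

lemma mcomplete_const_unit_interval: "mcomplete_of const_unit_interval"
proof -
  have "continuous_on {0..1} (const_bcontfun :: real \<Rightarrow> real \<Rightarrow>\<^sub>C real)"
    unfolding continuous_on_iff by (metis dist_const_bcontfun)
  then show ?thesis
    unfolding const_unit_interval_def by (intro mcomplete_of_compact_submetric compact_continuous_image) auto
qed

lemma const_bcontfun_in_const_unit_interval:
  "t \<in> {0..1} \<Longrightarrow> const_bcontfun t \<in> mspace const_unit_interval"
  unfolding mspace_const_unit_interval by (rule imageI)

lemma mdist_const_unit_interval_const:
  "mdist const_unit_interval (const_bcontfun s) (const_bcontfun t) = \<bar>s - t\<bar>"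
  by (simp add: mdist_const_unit_interval dist_const_bcontfun dist_real_def)

lemma not_normed_space_metric_const_unit_interval: "\<not> is_normed_space_metric const_unit_interval"
proof (rule bounded_not_normed_space_metric)
  show "mdist const_unit_interval x y \<le> 1"
    if "x \<in> mspace const_unit_interval" "y \<in> mspace const_unit_interval" for x y
    using that by (auto simp: mspace_const_unit_interval mdist_const_unit_interval_const)
  show "const_bcontfun 0 \<in> mspace const_unit_interval" "const_bcontfun 1 \<in> mspace const_unit_interval"
    by (simp_all only: const_bcontfun_in_const_unit_interval atLeastAtMost_iff order_refl zero_le_one)
  show "const_bcontfun 0 \<noteq> (const_bcontfun 1 :: real \<Rightarrow>\<^sub>C real)"
  proof
    assume eq: "const_bcontfun 0 = (const_bcontfun 1 :: real \<Rightarrow>\<^sub>C real)"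
    show False
      using arg_cong[OF eq, of "\<lambda>f. apply_bcontfun f 0"] by simp
  qed
qed

lemma norm_diff_le_lipnorm_const_unit_interval:
  assumes "\<forall>P\<in>mspace const_unit_interval. \<forall>Q\<in>mspace const_unit_interval.
      norm (f P - f Q) \<le> K * mdist const_unit_interval P Q"
    and "s \<in> {0..1}" "t \<in> {0..1}"
  shows "norm (f (const_bcontfun s) - f (const_bcontfun t)) \<le> lipnorm const_unit_interval f * \<bar>s - t\<bar>"
  using norm_diff_le_lipnorm[OF assms(1) const_bcontfun_in_const_unit_interval[OF assms(2)]
      const_bcontfun_in_const_unit_interval[OF assms(3)]]
  by (simp add: mdist_const_unit_interval_const)

lemma attains_toward_const_unit_intervalE:
  assumes "attains_toward const_unit_interval g y"
  obtains a b where "\<And>n. a n \<in> {0..1}" "\<And>n. b n \<in> {0..1}" "\<And>n. a n \<noteq> b n"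
    "(\<lambda>n. (g (const_bcontfun (a n)) - g (const_bcontfun (b n))) /\<^sub>R \<bar>a n - b n\<bar>) \<longlonglongrightarrow> y"
    "norm y = lipnorm const_unit_interval g"
proof -
  obtain p q where pq: "\<And>n. p n \<in> mspace const_unit_interval \<and> q n \<in> mspace const_unit_interval \<and> p n \<noteq> q n"
    and lim: "(\<lambda>n. (g (p n) - g (q n)) /\<^sub>R mdist const_unit_interval (p n) (q n)) \<longlonglongrightarrow> y"
    and "norm y = lipnorm const_unit_interval g"
    using assms unfolding attains_toward_def by blast
  define a where "a n = apply_bcontfun (p n) 0" for n
  define b where "b n = apply_bcontfun (q n) 0" for n
  have p: "p n = const_bcontfun (a n)" "a n \<in> {0..1}" and q: "q n = const_bcontfun (b n)" "b n \<in> {0..1}" for n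
    using pq[of n] unfolding a_def b_def by (auto simp: mspace_const_unit_interval)
  show ?thesis
  proof (rule that)
    show "a n \<noteq> b n" for n
      using pq[of n] p(1)[of n] q(1)[of n] by auto
    show "(\<lambda>n. (g (const_bcontfun (a n)) - g (const_bcontfun (b n))) /\<^sub>R \<bar>a n - b n\<bar>) \<longlonglongrightarrow> y"
      using lim by (simp add: p q mdist_const_unit_interval_const)
  qed (use p q \<open>norm y = lipnorm const_unit_interval g\<close> in auto)
qed

lemma lip0_phi_const_unit_interval:
  "lip0 const_unit_interval (const_bcontfun 0) UNIV (\<lambda>P. phi (apply_bcontfun P 0))"
  unfolding lip0_def
  by (auto simp: phi_0 mspace_const_unit_interval mdist_const_unit_interval_const
      intro!: exI[of _ 2] norm_phi_diff_le)

lemma not_A_dense_const_unit_interval: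
  "\<not> A_dense const_unit_interval (const_bcontfun 0) (UNIV :: (real \<Rightarrow>\<^sub>C real) set)"
proof
  let ?M = const_unit_interval and ?Y = "UNIV :: (real \<Rightarrow>\<^sub>C real) set"
    and ?f = "\<lambda>P. phi (apply_bcontfun P 0)"
  assume "A_dense ?M (const_bcontfun 0) ?Y"
  then have "\<forall>e>0. \<exists>g\<in>Aset ?M (const_bcontfun 0) ?Y. lipnorm ?M (\<lambda>P. ?f P - g P) < e"
    using lip0_phi_const_unit_interval unfolding A_dense_def by blast
  moreover have "(1/100 :: real) > 0"
    by simp
  ultimately obtain g where "g \<in> Aset ?M (const_bcontfun 0) ?Y"
    and near: "lipnorm ?M (\<lambda>P. ?f P - g P) < 1/100"
    by blast
  then obtain K' y where
    g_lip: "\<forall>P\<in>mspace ?M. \<forall>Q\<in>mspace ?M. norm (g P - g Q) \<le> K' * mdist ?M P Q"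
    and "attains_toward ?M g y"
    unfolding Aset_def lip0_def by blast
  then obtain a b where ab: "\<And>n. a n \<in> {0..1}" "\<And>n. b n \<in> {0..1}" "\<And>n. a n \<noteq> b n"
    and lim: "(\<lambda>n. (g (const_bcontfun (a n)) - g (const_bcontfun (b n))) /\<^sub>R \<bar>a n - b n\<bar>) \<longlonglongrightarrow> y"
    and norm_y: "norm y = lipnorm ?M g"
    using attains_toward_const_unit_intervalE by blast
  obtain K where "\<forall>P\<in>mspace ?M. \<forall>Q\<in>mspace ?M. norm (?f P - ?f Q) \<le> K * mdist ?M P Q"
    using lip0_phi_const_unit_interval unfolding lip0_def by blast
  from lipschitz_bound_diff[OF this g_lip]
  have fg_lip: "\<forall>P\<in>mspace ?M. \<forall>Q\<in>mspace ?M.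
      norm ((?f P - g P) - (?f Q - g Q)) \<le> (K + K') * mdist ?M P Q" .
  show False
  proof (rule no_norming_sequence_near_phi[OF _ _ ab lim norm_y])
    show "norm (g (const_bcontfun s) - g (const_bcontfun t)) \<le> lipnorm ?M g * \<bar>s - t\<bar>"
      if "s \<in> {0..1}" "t \<in> {0..1}" for s t
      using norm_diff_le_lipnorm_const_unit_interval[OF g_lip that] .
    show "norm (phi s - g (const_bcontfun s) - (phi t - g (const_bcontfun t))) \<le> \<bar>s - t\<bar> / 100"
      if "s \<in> {0..1}" "t \<in> {0..1}" for s t
      using norm_diff_le_lipnorm_const_unit_interval[OF fg_lip that]
        mult_right_mono[OF less_imp_le[OF near], of "\<bar>s - t\<bar>"] by simp
  qed
qed

theorem corollary3p6:
  shows "\<exists>(M :: (real \<Rightarrow>\<^sub>C real) metric) (z :: real \<Rightarrow>\<^sub>C real) (Y :: (real \<Rightarrow>\<^sub>C real) set).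
           z \<in> mspace M \<and> mcomplete_of M \<and> \<not> is_normed_space_metric M \<and>
           subspace Y \<and> closed Y \<and> \<not> A_dense M z Y"
proof (intro exI conjI)
  show "const_bcontfun 0 \<in> mspace const_unit_interval"
    by (simp only: const_bcontfun_in_const_unit_interval atLeastAtMost_iff order_refl zero_le_one)
  show "mcomplete_of const_unit_interval"
    by (rule mcomplete_const_unit_interval)
  show "\<not> is_normed_space_metric const_unit_interval"
    by (rule not_normed_space_metric_const_unit_interval)
  show "\<not> A_dense const_unit_interval (const_bcontfun 0) (UNIV :: (real \<Rightarrow>\<^sub>C real) set)"
    by (rule not_A_dense_const_unit_interval)
qed (simp_all add: subspace_UNIV)

end
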